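(* Assume (A1) and (B2), and let $b_n$ be random vectors with $\|b_n-b\|=O_{\mathbb P}(r_n^{-1})$ for a deterministic sequence $r_n\to\infty$. Then $$d_H\big(OPT(b_n),OPT(b)\big)=O_{\mathbb P}(r_n^{-1}),$$ where $d_H(S,T)=\max\{\sup_{x\in S}\inf_{y\in T}\|x-y\|,\ \sup_{x\in T}\inf_{y\in S}\|x-y\|\}$ is the Hausdorff distance.
   Context: $A\in\mathbb{R}^{m\times d}$ has full rank $m\le d$, $b\in\mathbb{R}^m$, $c\in\mathbb{R}^d$. For $\beta\in\mathbb{R}^m$, $(\mathrm{P}_\beta)$ is $\min c^Tx$ s.t. $Ax=\beta$, $x\ge0$, and $OPT(\beta)$ is its set of optimal solutions. (A1): $OPT(b)$ is non-empty and bounded. (B2): $\mathbb{P}((\mathrm{P}_{b_n})\text{ has an optimal solution})\to1$. *)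

theory Defs
  imports "HOL-Analysis.Analysis" "HOL-Probability.Probability"
begin

definition OPT :: "real^'d^'m \<Rightarrow> real^'d \<Rightarrow> real^'m \<Rightarrow> (real^'d) set" where
  "OPT A c \<beta> = {x. A *v x = \<beta> \<and> (\<forall>i. 0 \<le> x $ i) \<and>
      (\<forall>y. A *v y = \<beta> \<and> (\<forall>i. 0 \<le> y $ i) \<longrightarrow> c \<bullet> x \<le> c \<bullet> y)}"

text \<open>Hausdorff distance as in the paper, with values in the extended reals
  (sup over the empty set is -infinity, inf over the empty set is +infinity).\<close>
definition hausdorff_dist :: "'a::metric_space set \<Rightarrow> 'a set \<Rightarrow> ereal" where
  "hausdorff_dist S T = max (SUP x\<in>S. INF y\<in>T. ereal (dist x y))
                             (SUP x\<in>T. INF y\<in>S. ereal (dist x y))"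

text \<open>X n = O_P(1 / r n): stochastically bounded after scaling by r n.
  Probabilities of possibly non-measurable events are taken as outer probabilities.\<close>
definition bigO_P :: "'w measure \<Rightarrow> (nat \<Rightarrow> 'w \<Rightarrow> ereal) \<Rightarrow> (nat \<Rightarrow> real) \<Rightarrow> bool" where
  "bigO_P M X r \<longleftrightarrow> (\<forall>\<epsilon>>0. \<exists>K::real. \<exists>N. \<forall>n\<ge>N. \<exists>E\<in>sets M.
      {\<omega>\<in>space M. ereal (r n) * X n \<omega> > ereal K} \<subseteq> E \<and> measure M E < \<epsilon>)"

end

theory Submission
  imports Defs
begin

text \<open>Hoffman's bound: for a linear map \<open>f\<close> on \<open>\<real>\<^sup>n\<close> there is \<open>L\<close> such that for nonnegative
  \<open>x, z\<close> some nonnegative \<open>x'\<close> with \<open>f x' = f z\<close> lies within \<open>L \<parallel>f z - f x\<parallel>\<close> of \<open>x\<close>. Take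
  \<open>x' = x + p\<close>, where \<open>p\<close> is a preimage of \<open>f (z - x)\<close> conformal to \<open>z - x\<close> (each \<open>p\<^sub>i\<close> between
  \<open>0\<close> and \<open>z\<^sub>i - x\<^sub>i\<close>) with \<open>\<parallel>p\<parallel> \<le> L \<parallel>f (z - x)\<parallel>\<close>. Such a \<open>p\<close> exists for every \<open>d\<close> by induction on
  the support of \<open>d\<close>: if \<open>f\<close> is injective on vectors supported in \<open>supp d\<close>, take \<open>p = d\<close>;
  otherwise a kernel vector \<open>u\<close> with that support writes \<open>d\<close> as a convex combination of
  \<open>d - s u\<close> and \<open>d + s' u\<close>, both of smaller support and of the same signs as \<open>d\<close>.

  Hoffman's bound for \<open>x \<mapsto> (A x, c \<bullet> x)\<close> makes \<open>\<beta> \<mapsto> OPT(\<beta>)\<close> Lipschitz for the Hausdorff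
  distance on its domain, so \<open>d\<^sub>H(OPT(b\<^sub>n), OPT(b)) \<le> C \<parallel>b\<^sub>n - b\<parallel>\<close> on the events of (B2).\<close>

definition coord_support :: "real^'n \<Rightarrow> 'n set" where
  "coord_support v = {i. v$i \<noteq> 0}"

definition sign_compatible :: "real^'n \<Rightarrow> real^'n \<Rightarrow> bool" where
  "sign_compatible u d \<longleftrightarrow> (\<forall>i. (0 \<le> d$i \<longrightarrow> 0 \<le> u$i) \<and> (d$i \<le> 0 \<longrightarrow> u$i \<le> 0))"

definition conformal :: "real^'n \<Rightarrow> real^'n \<Rightarrow> bool" where
  "conformal p d \<longleftrightarrow>
     (\<forall>i. (0 \<le> d$i \<longrightarrow> 0 \<le> p$i \<and> p$i \<le> d$i) \<and> (d$i \<le> 0 \<longrightarrow> d$i \<le> p$i \<and> p$i \<le> 0))"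

lemma conformal_refl: "conformal d d"
  unfolding conformal_def by auto

lemma conformal_trans: "conformal p q \<Longrightarrow> conformal q d \<Longrightarrow> conformal p d"
  unfolding conformal_def by (meson order_trans)

lemma conformal_convex_combination:
  assumes "conformal p1 d1" "conformal p2 d2" "sign_compatible d1 d" "sign_compatible d2 d"
    and "0 \<le> a" "0 \<le> b" "d = a *\<^sub>R d1 + b *\<^sub>R d2"
  shows "conformal (a *\<^sub>R p1 + b *\<^sub>R p2) d"
  unfolding conformal_def
proof (intro allI)
  fix i
  have p1: "(0 \<le> d1$i \<longrightarrow> 0 \<le> p1$i \<and> p1$i \<le> d1$i) \<and> (d1$i \<le> 0 \<longrightarrow> d1$i \<le> p1$i \<and> p1$i \<le> 0)"
    and p2: "(0 \<le> d2$i \<longrightarrow> 0 \<le> p2$i \<and> p2$i \<le> d2$i) \<and> (d2$i \<le> 0 \<longrightarrow> d2$i \<le> p2$i \<and> p2$i \<le> 0)"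
    using assms(1,2) unfolding conformal_def by blast+
  have di: "d$i = a * d1$i + b * d2$i" using assms(7) by simp
  consider "0 \<le> d1$i" "0 \<le> d2$i" | "d1$i \<le> 0" "d2$i \<le> 0"
    using assms(3,4) unfolding sign_compatible_def by (meson linear)
  then have "(0 \<le> d$i \<longrightarrow> 0 \<le> a * p1$i + b * p2$i \<and> a * p1$i + b * p2$i \<le> d$i) \<and>
      (d$i \<le> 0 \<longrightarrow> d$i \<le> a * p1$i + b * p2$i \<and> a * p1$i + b * p2$i \<le> 0)"
  proof cases
    case 1
    with p1 p2 assms(5,6) have "0 \<le> a * p1$i" "a * p1$i \<le> a * d1$i" "0 \<le> b * p2$i" "b * p2$i \<le> b * d2$i"
      by (simp_all add: mult_left_mono)
    then show ?thesis using di by linarith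
  next
    case 2
    with p1 p2 assms(5,6) have "a * p1$i \<le> 0" "a * d1$i \<le> a * p1$i" "b * p2$i \<le> 0" "b * d2$i \<le> b * p2$i"
      by (simp_all add: mult_left_mono mult_nonneg_nonpos)
    then show ?thesis using di by linarith
  qed
  then show "(0 \<le> d$i \<longrightarrow> 0 \<le> (a *\<^sub>R p1 + b *\<^sub>R p2)$i \<and> (a *\<^sub>R p1 + b *\<^sub>R p2)$i \<le> d$i) \<and>
      (d$i \<le> 0 \<longrightarrow> d$i \<le> (a *\<^sub>R p1 + b *\<^sub>R p2)$i \<and> (a *\<^sub>R p1 + b *\<^sub>R p2)$i \<le> 0)"
    by simp
qed

lemma nonneg_add_conformal_diff:
  assumes "\<forall>i. 0 \<le> x$i" "\<forall>i. 0 \<le> z$i" "conformal p (z - x)"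
  shows "\<forall>i. 0 \<le> (x + p)$i"
proof
  fix i
  have "0 \<le> p$i \<or> z$i - x$i \<le> p$i"
    using assms(3) unfolding conformal_def by (metis vector_minus_component linear)
  then show "0 \<le> (x + p)$i" using assms(1,2)[rule_format, of i] by auto
qed

lemma shrink_component:
  fixes d w s :: real
  assumes "0 < s" "d = 0 \<longrightarrow> w = 0" "0 < w * d \<longrightarrow> s \<le> d / w"
  shows "(0 \<le> d \<longrightarrow> 0 \<le> d - s * w) \<and> (d \<le> 0 \<longrightarrow> d - s * w \<le> 0)"
    and "0 \<le> w * d \<Longrightarrow> (0 \<le> d \<longrightarrow> d - s * w \<le> d) \<and> (d \<le> 0 \<longrightarrow> d \<le> d - s * w)"
proof -
  have "0 \<le> s * w" if "0 \<le> w" using assms(1) that by simp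
  moreover have "s * w \<le> 0" if "w \<le> 0" using assms(1) that by (simp add: mult_nonneg_nonpos)
  moreover have "s * w \<le> d" if "0 < w" "0 < d" using assms(1,3) that by (simp add: le_divide_eq)
  moreover have "d \<le> s * w" if "w < 0" "d < 0"
    using assms(1,3) that mult_neg_neg[OF that] by (simp add: le_divide_eq)
  ultimately show "(0 \<le> d \<longrightarrow> 0 \<le> d - s * w) \<and> (d \<le> 0 \<longrightarrow> d - s * w \<le> 0)"
    and "0 \<le> w * d \<Longrightarrow> (0 \<le> d \<longrightarrow> d - s * w \<le> d) \<and> (d \<le> 0 \<longrightarrow> d \<le> d - s * w)"
    using assms(2) zero_less_mult_iff[of w d] zero_le_mult_iff[of w d]
    by (smt (verit))+
qed

lemma shrink_support:
  fixes d w :: "real^'n"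
  assumes supp: "coord_support w \<subseteq> coord_support d" and pos: "\<exists>i. 0 < w$i * d$i"
  obtains s where "0 < s" "card (coord_support (d - s *\<^sub>R w)) < card (coord_support d)"
    "sign_compatible (d - s *\<^sub>R w) d"
    "\<forall>i. 0 \<le> w$i * d$i \<Longrightarrow> conformal (d - s *\<^sub>R w) d"
proof -
  define I where "I = {i. 0 < w$i * d$i}"
  define s where "s = Min ((\<lambda>i. d$i / w$i) ` I)"
  have "finite I" "I \<noteq> {}" using pos by (auto simp: I_def)
  then have "s \<in> (\<lambda>i. d$i / w$i) ` I"
    unfolding s_def by (intro Min_in) auto
  then obtain k where k: "k \<in> I" "s = d$k / w$k" by blast
  have s_le: "0 < w$i * d$i \<longrightarrow> s \<le> d$i / w$i" for i
    using \<open>finite I\<close> unfolding s_def I_def by auto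
  have "0 < s" using k by (auto simp: I_def zero_less_mult_iff zero_less_divide_iff)
  have d0: "d$i = 0 \<longrightarrow> w$i = 0" for i using supp by (auto simp: coord_support_def)
  have "(d - s *\<^sub>R w)$k = 0" "d$k \<noteq> 0"
    using k by (auto simp: I_def)
  then have "coord_support (d - s *\<^sub>R w) \<subseteq> coord_support d - {k}" "k \<in> coord_support d"
    using supp by (auto simp: coord_support_def)
  then have "card (coord_support (d - s *\<^sub>R w)) < card (coord_support d)"
    by (metis card_Diff1_less card_mono finite le_less_trans)
  moreover have "sign_compatible (d - s *\<^sub>R w) d"
    unfolding sign_compatible_def using shrink_component(1)[OF \<open>0 < s\<close> d0 s_le] by simp
  moreover have "conformal (d - s *\<^sub>R w) d" if "\<forall>i. 0 \<le> w$i * d$i"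
  proof (unfold conformal_def, intro allI)
    fix i
    show "(0 \<le> d$i \<longrightarrow> 0 \<le> (d - s *\<^sub>R w)$i \<and> (d - s *\<^sub>R w)$i \<le> d$i) \<and>
        (d$i \<le> 0 \<longrightarrow> d$i \<le> (d - s *\<^sub>R w)$i \<and> (d - s *\<^sub>R w)$i \<le> 0)"
      using shrink_component[OF \<open>0 < s\<close> d0 s_le, of i] that by auto
  qed
  ultimately show thesis using that \<open>0 < s\<close> by blast
qed

lemma injective_on_support_bound:
  fixes f :: "real^'n \<Rightarrow> 'b::euclidean_space"
  assumes "linear f"
  obtains L where "0 \<le> L"
    "\<And>d. (\<forall>v. coord_support v \<subseteq> coord_support d \<longrightarrow> f v = 0 \<longrightarrow> v = 0) \<Longrightarrow>
      norm d \<le> L * norm (f d)"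
proof -
  define S where "S J = {v::real^'n. coord_support v \<subseteq> J}" for J
  have bl: "bounded_linear f" using assms linear_conv_bounded_linear by blast
  have sub: "subspace (S J)" for J
    unfolding S_def subspace_def coord_support_def by (auto simp: subset_eq) (metis add_0)
  have "\<exists>l\<ge>0. (\<forall>v\<in>S J. f v = 0 \<longrightarrow> v = 0) \<longrightarrow> (\<forall>v\<in>S J. norm v \<le> l * norm (f v))" for J
  proof (cases "\<forall>v\<in>S J. f v = 0 \<longrightarrow> v = 0")
    case True
    then obtain e where "0 < e" "\<forall>v\<in>S J. e * norm v \<le> norm (f v)"
      using injective_imp_isometric[OF closed_subspace[OF sub] sub bl True] by blast
    then show ?thesis by (intro exI[of _ "1/e"]) (auto simp: field_simps mult.commute)
  qed auto
  then obtain l where l: "\<And>J. 0 \<le> l J"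
    "\<And>J. (\<forall>v\<in>S J. f v = 0 \<longrightarrow> v = 0) \<Longrightarrow> \<forall>v\<in>S J. norm v \<le> l J * norm (f v)"
    by metis
  \<comment> \<open>finitely many supports, so one constant serves them all\<close>
  define L where "L = (\<Sum>J\<in>UNIV. l J)"
  have lL: "l J \<le> L" for J
    unfolding L_def by (rule member_le_sum) (auto intro: l)
  show thesis
  proof (rule that)
    show "0 \<le> L" unfolding L_def by (intro sum_nonneg) (auto intro: l)
  next
    fix d :: "real^'n"
    assume "\<forall>v. coord_support v \<subseteq> coord_support d \<longrightarrow> f v = 0 \<longrightarrow> v = 0"
    then have "norm d \<le> l (coord_support d) * norm (f d)"
      using l(2)[of "coord_support d"] unfolding S_def by blast
    also have "\<dots> \<le> L * norm (f d)" using lL by (intro mult_right_mono) auto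
    finally show "norm d \<le> L * norm (f d)" .
  qed
qed

lemma convex_combination_preimage:
  assumes "linear f" "0 \<le> a" "0 \<le> b" "a + b = 1"
    and "f p1 = y" "f p2 = y" "norm p1 \<le> B" "norm p2 \<le> B"
  shows "f (a *\<^sub>R p1 + b *\<^sub>R p2) = y" "norm (a *\<^sub>R p1 + b *\<^sub>R p2) \<le> B"
proof -
  show "f (a *\<^sub>R p1 + b *\<^sub>R p2) = y"
    using assms by (simp add: linear_add linear_scale flip: scaleR_add_left)
  have "norm (a *\<^sub>R p1 + b *\<^sub>R p2) \<le> a * norm p1 + b * norm p2"
    using assms(2,3) by (metis abs_of_nonneg norm_scaleR norm_triangle_ineq)
  also have "\<dots> \<le> a * B + b * B"
    using assms by (intro add_mono mult_left_mono) auto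
  finally show "norm (a *\<^sub>R p1 + b *\<^sub>R p2) \<le> B"
    using assms(4) by (simp flip: distrib_right)
qed

lemma kernel_vector_positive_on_support:
  assumes "linear f" "coord_support v \<subseteq> coord_support d" "f v = 0" "v \<noteq> 0"
  obtains u where "coord_support u \<subseteq> coord_support d" "f u = 0" "\<exists>i. 0 < u$i * d$i"
proof -
  obtain i where "v$i * d$i \<noteq> 0"
    using assms(2,4) by (auto simp: coord_support_def vec_eq_iff)
  show thesis
  proof (cases "0 < v$i * d$i")
    case False
    with \<open>v$i * d$i \<noteq> 0\<close> have "v$i * d$i < 0" by linarith
    then have "0 < (- v)$i * d$i" by simp
    moreover have "coord_support (- v) = coord_support v" "f (- v) = 0"
      using assms(1,3) by (simp_all add: linear_neg coord_support_def)
    ultimately show thesis using that[of "- v"] assms(2) by auto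
  qed (use assms that in blast)
qed

lemma conformal_preimage_step:
  fixes f :: "real^'n \<Rightarrow> 'b::real_normed_vector"
  assumes lin: "linear f"
    and u: "coord_support u \<subseteq> coord_support d" "f u = 0" "\<exists>i. 0 < u$i * d$i"
    and IH: "\<And>d'. card (coord_support d') < card (coord_support d) \<Longrightarrow>
      \<exists>p. conformal p d' \<and> f p = f d' \<and> norm p \<le> L * norm (f d')"
  shows "\<exists>p. conformal p d \<and> f p = f d \<and> norm p \<le> L * norm (f d)"
proof -
  obtain s where s: "0 < s" "card (coord_support (d - s *\<^sub>R u)) < card (coord_support d)"
    "sign_compatible (d - s *\<^sub>R u) d" "\<forall>i. 0 \<le> u$i * d$i \<Longrightarrow> conformal (d - s *\<^sub>R u) d"
    using shrink_support[OF u(1,3)] by blast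
  have "f (d - s *\<^sub>R u) = f d" using u(2) lin by (simp add: linear_diff linear_scale)
  then obtain p1 where p1: "conformal p1 (d - s *\<^sub>R u)" "f p1 = f d" "norm p1 \<le> L * norm (f d)"
    using IH s(2) by metis
  show ?thesis
  proof (cases "\<forall>i. 0 \<le> u$i * d$i")
    case True
    then show ?thesis using p1 s(4) conformal_trans by blast
  next
    case False
    then have "coord_support (- u) \<subseteq> coord_support d" "\<exists>i. 0 < (- u)$i * d$i"
      using u(1) by (auto simp: coord_support_def not_le)
    then obtain s' where "0 < s'" "card (coord_support (d - s' *\<^sub>R - u)) < card (coord_support d)"
      "sign_compatible (d - s' *\<^sub>R - u) d"
      using shrink_support by blast
    then have s': "0 < s'" "card (coord_support (d + s' *\<^sub>R u)) < card (coord_support d)"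
      "sign_compatible (d + s' *\<^sub>R u) d"
      by simp_all
    have "f (d + s' *\<^sub>R u) = f d" using u(2) lin by (simp add: linear_add linear_scale)
    then obtain p2 where p2: "conformal p2 (d + s' *\<^sub>R u)" "f p2 = f d" "norm p2 \<le> L * norm (f d)"
      using IH s'(2) by metis
    define a where "a = s' / (s + s')"
    define b where "b = s / (s + s')"
    have ab: "0 \<le> a" "0 \<le> b" "a + b = 1"
      using s(1) s'(1) by (simp_all add: a_def b_def flip: add_divide_distrib)
    have "d = a *\<^sub>R (d - s *\<^sub>R u) + b *\<^sub>R (d + s' *\<^sub>R u)"
      using s(1) s'(1) by (simp add: a_def b_def algebra_simps flip: scaleR_add_left add_divide_distrib)
    then show ?thesis
      using conformal_convex_combination[OF p1(1) p2(1) s(3) s'(3) ab(1,2)]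
        convex_combination_preimage[OF lin ab p1(2) p2(2) p1(3) p2(3)] by blast
  qed
qed

lemma conformal_preimage_bound:
  fixes f :: "real^'n \<Rightarrow> 'b::euclidean_space"
  assumes lin: "linear f"
  obtains L where "0 \<le> L" "\<And>d. \<exists>p. conformal p d \<and> f p = f d \<and> norm p \<le> L * norm (f d)"
proof -
  obtain L where "0 \<le> L" and inj:
    "\<And>d. \<forall>v. coord_support v \<subseteq> coord_support d \<longrightarrow> f v = 0 \<longrightarrow> v = 0 \<Longrightarrow>
      norm d \<le> L * norm (f d)"
    using injective_on_support_bound[OF lin] by blast
  have "\<exists>p. conformal p d \<and> f p = f d \<and> norm p \<le> L * norm (f d)" for d
  proof (induction "card (coord_support d)" arbitrary: d rule: less_induct)
    case less
    show ?case
    proof (cases "\<forall>v. coord_support v \<subseteq> coord_support d \<longrightarrow> f v = 0 \<longrightarrow> v = 0")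
      case True
      then show ?thesis using inj conformal_refl by blast
    next
      case False
      then obtain u where "coord_support u \<subseteq> coord_support d" "f u = 0" "\<exists>i. 0 < u$i * d$i"
        using kernel_vector_positive_on_support[OF lin] by blast
      then show ?thesis using conformal_preimage_step[OF lin] less by blast
    qed
  qed
  then show thesis using that \<open>0 \<le> L\<close> by blast
qed

definition hoffman_constant :: "(real^'n \<Rightarrow> 'b::real_normed_vector) \<Rightarrow> real \<Rightarrow> bool" where
  "hoffman_constant f L \<longleftrightarrow> (\<forall>x z. (\<forall>i. 0 \<le> x$i) \<longrightarrow> (\<forall>i. 0 \<le> z$i) \<longrightarrow>
     (\<exists>x'. (\<forall>i. 0 \<le> x'$i) \<and> f x' = f z \<and> norm (x' - x) \<le> L * norm (f z - f x)))"

lemma hoffman_constant_exists: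
  fixes f :: "real^'n \<Rightarrow> 'b::euclidean_space"
  assumes lin: "linear f"
  obtains L where "0 \<le> L" "hoffman_constant f L"
proof -
  obtain L where "0 \<le> L" and L: "\<And>d. \<exists>p. conformal p d \<and> f p = f d \<and> norm p \<le> L * norm (f d)"
    using conformal_preimage_bound[OF lin] by blast
  have "hoffman_constant f L"
    unfolding hoffman_constant_def
  proof (intro allI impI)
    fix x z :: "real^'n"
    assume x: "\<forall>i. 0 \<le> x$i" and z: "\<forall>i. 0 \<le> z$i"
    obtain p where p: "conformal p (z - x)" "f p = f z - f x" "norm p \<le> L * norm (f z - f x)"
      using L[of "z - x"] lin by (auto simp: linear_diff)
    then have "(\<forall>i. 0 \<le> (x + p)$i) \<and> f (x + p) = f z \<and> norm ((x + p) - x) \<le> L * norm (f z - f x)"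
      using nonneg_add_conformal_diff[OF x z p(1)] lin by (simp add: linear_add)
    then show "\<exists>x'. (\<forall>i. 0 \<le> x'$i) \<and> f x' = f z \<and> norm (x' - x) \<le> L * norm (f z - f x)" ..
  qed
  with \<open>0 \<le> L\<close> show thesis using that by blast
qed

lemma OPT_value_le:
  assumes L: "hoffman_constant ((*v) A) L"
    and x: "x \<in> OPT A c \<beta>" and y: "y \<in> OPT A c \<beta>'"
  shows "c \<bullet> x \<le> c \<bullet> y + norm c * L * norm (\<beta> - \<beta>')"
proof -
  have "\<forall>i. 0 \<le> x$i" "\<forall>i. 0 \<le> y$i" and Ax: "A *v x = \<beta>" and Ay: "A *v y = \<beta>'"
    using x y unfolding OPT_def by auto
  then obtain y' where y': "\<forall>i. 0 \<le> y'$i" "A *v y' = A *v x" "norm (y' - y) \<le> L * norm (A *v x - A *v y)"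
    using L unfolding hoffman_constant_def by blast
  have "c \<bullet> x \<le> c \<bullet> y'" using x y'(1,2) unfolding OPT_def by auto
  also have "\<dots> = c \<bullet> y + c \<bullet> (y' - y)" by (simp add: inner_diff_right)
  also have "\<dots> \<le> c \<bullet> y + norm c * norm (y' - y)" using norm_cauchy_schwarz by simp
  also have "\<dots> \<le> c \<bullet> y + norm c * (L * norm (\<beta> - \<beta>'))"
    using y'(3) Ax Ay by (simp add: mult_left_mono)
  finally show ?thesis by (simp add: mult.assoc)
qed

text \<open>\<open>OPT A c \<beta>'\<close> is the nonnegative preimage of \<open>(\<beta>', v(\<beta>'))\<close> under \<open>x \<mapsto> (A x, c \<bullet> x)\<close>,
  where the optimal value \<open>v\<close> is Lipschitz by the previous lemma.\<close>
lemma OPT_lipschitz: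
  fixes A :: "real^'d^'m" and c :: "real^'d"
  obtains C where "0 \<le> C"
    "\<And>\<beta> \<beta>' x. x \<in> OPT A c \<beta> \<Longrightarrow> OPT A c \<beta>' \<noteq> {} \<Longrightarrow>
      \<exists>x'\<in>OPT A c \<beta>'. dist x x' \<le> C * norm (\<beta> - \<beta>')"
proof -
  obtain L1 where "0 \<le> L1" and L1: "hoffman_constant ((*v) A) L1"
    using hoffman_constant_exists[OF matrix_vector_mul_linear] by blast
  define g where "g x = (A *v x, c \<bullet> x)" for x
  have "linear g"
    unfolding g_def
    by (intro bounded_linear.linear bounded_linear_Pair matrix_vector_mul_bounded_linear bounded_linear_inner_right)
  then obtain L2 where "0 \<le> L2" and L2: "hoffman_constant g L2"
    using hoffman_constant_exists by blast
  define C where "C = L2 * (1 + norm c * L1)"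
  have "\<exists>x'\<in>OPT A c \<beta>'. dist x x' \<le> C * norm (\<beta> - \<beta>')"
    if x: "x \<in> OPT A c \<beta>" and y: "y \<in> OPT A c \<beta>'" for \<beta> \<beta>' x y
  proof -
    have "\<bar>c \<bullet> y - c \<bullet> x\<bar> \<le> norm c * L1 * norm (\<beta> - \<beta>')"
      using OPT_value_le[OF L1 x y] OPT_value_le[OF L1 y x] by (simp add: norm_minus_commute)
    moreover have "g y - g x = (\<beta>' - \<beta>, c \<bullet> y - c \<bullet> x)"
      using x y unfolding g_def OPT_def by simp
    ultimately have ng: "norm (g y - g x) \<le> (1 + norm c * L1) * norm (\<beta> - \<beta>')"
      using norm_Pair_le[of "\<beta>' - \<beta>" "c \<bullet> y - c \<bullet> x"] by (simp add: norm_minus_commute algebra_simps)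
    have "\<forall>i. 0 \<le> x$i" "\<forall>i. 0 \<le> y$i" using x y unfolding OPT_def by auto
    then obtain x' where x': "\<forall>i. 0 \<le> x'$i" "g x' = g y" "norm (x' - x) \<le> L2 * norm (g y - g x)"
      using L2 unfolding hoffman_constant_def by blast
    have "dist x x' = norm (x' - x)" by (simp add: dist_norm norm_minus_commute)
    also have "\<dots> \<le> L2 * norm (g y - g x)" by (fact x'(3))
    also have "\<dots> \<le> C * norm (\<beta> - \<beta>')"
      unfolding C_def using mult_left_mono[OF ng \<open>0 \<le> L2\<close>] by (simp add: mult.assoc)
    finally have "dist x x' \<le> C * norm (\<beta> - \<beta>')" .
    moreover have "x' \<in> OPT A c \<beta>'"
      using x'(1,2) y unfolding OPT_def g_def by simp
    ultimately show ?thesis by blast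
  qed
  moreover have "0 \<le> C" unfolding C_def using \<open>0 \<le> L1\<close> \<open>0 \<le> L2\<close> by simp
  ultimately show thesis using that by blast
qed

lemma hausdorff_dist_le:
  assumes "\<forall>x\<in>S. \<exists>y\<in>T. dist x y \<le> e" "\<forall>y\<in>T. \<exists>x\<in>S. dist y x \<le> e"
  shows "hausdorff_dist S T \<le> ereal e"
proof -
  have "(SUP x\<in>S. INF y\<in>T. ereal (dist x y)) \<le> ereal e"
    if "\<forall>x\<in>S. \<exists>y\<in>T. dist x y \<le> e" for S T :: "'a set"
    using that by (intro SUP_least) (metis INF_lower2 ereal_less_eq(3))
  then show ?thesis unfolding hausdorff_dist_def using assms by simp
qed

lemma hausdorff_dist_OPT_le:
  fixes A :: "real^'d^'m" and c :: "real^'d"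
  obtains C where "0 \<le> C"
    "\<And>\<beta> \<beta>'. OPT A c \<beta> \<noteq> {} \<Longrightarrow> OPT A c \<beta>' \<noteq> {} \<Longrightarrow>
      hausdorff_dist (OPT A c \<beta>) (OPT A c \<beta>') \<le> ereal (C * norm (\<beta> - \<beta>'))"
proof -
  obtain C where "0 \<le> C" and C: "\<And>\<beta> \<beta>' x. x \<in> OPT A c \<beta> \<Longrightarrow> OPT A c \<beta>' \<noteq> {} \<Longrightarrow>
      \<exists>x'\<in>OPT A c \<beta>'. dist x x' \<le> C * norm (\<beta> - \<beta>')"
    using OPT_lipschitz by blast
  have "hausdorff_dist (OPT A c \<beta>) (OPT A c \<beta>') \<le> ereal (C * norm (\<beta> - \<beta>'))"
    if "OPT A c \<beta> \<noteq> {}" "OPT A c \<beta>' \<noteq> {}" for \<beta> \<beta>'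
  proof (rule hausdorff_dist_le)
    show "\<forall>x\<in>OPT A c \<beta>. \<exists>y\<in>OPT A c \<beta>'. dist x y \<le> C * norm (\<beta> - \<beta>')"
      using C that(2) by blast
    show "\<forall>y\<in>OPT A c \<beta>'. \<exists>x\<in>OPT A c \<beta>. dist y x \<le> C * norm (\<beta> - \<beta>')"
      using C[OF _ that(1)] by (metis norm_minus_commute)
  qed
  with \<open>0 \<le> C\<close> show thesis using that by blast
qed

lemma bigO_P_dominated:
  assumes "prob_space M" and Y: "bigO_P M Y r" and "0 \<le> C"
    and r: "eventually (\<lambda>n. 0 \<le> r n) sequentially"
    and E: "\<And>n. E n \<in> sets M" "(\<lambda>n. measure M (E n)) \<longlonglongrightarrow> 1"
    and XY: "\<And>n \<omega>. \<omega> \<in> E n \<Longrightarrow> X n \<omega> \<le> ereal C * Y n \<omega>"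
  shows "bigO_P M X r"
  unfolding bigO_P_def
proof (intro allI impI)
  fix \<epsilon> :: real
  assume "0 < \<epsilon>"
  then obtain K N1 where N1: "\<And>n. n \<ge> N1 \<Longrightarrow> \<exists>F\<in>sets M.
      {\<omega>\<in>space M. ereal (r n) * Y n \<omega> > ereal K} \<subseteq> F \<and> measure M F < \<epsilon>/2"
    using Y unfolding bigO_P_def by (meson half_gt_zero)
  have "eventually (\<lambda>n. 1 - \<epsilon>/2 < measure M (E n) \<and> 0 \<le> r n) sequentially"
    using order_tendstoD(1)[OF E(2), of "1 - \<epsilon>/2"] \<open>0 < \<epsilon>\<close> r by (auto intro: eventually_conj)
  then obtain N2 where N2: "\<And>n. n \<ge> N2 \<Longrightarrow> 1 - \<epsilon>/2 < measure M (E n) \<and> 0 \<le> r n"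
    unfolding eventually_sequentially by blast
  have "\<exists>F\<in>sets M. {\<omega>\<in>space M. ereal (r n) * X n \<omega> > ereal (C * K)} \<subseteq> F \<and> measure M F < \<epsilon>"
    if n: "max N1 N2 \<le> n" for n
  proof -
    obtain F where F: "F \<in> sets M" "{\<omega>\<in>space M. ereal (r n) * Y n \<omega> > ereal K} \<subseteq> F"
      "measure M F < \<epsilon>/2"
      using N1 n by auto
    have X_le: "ereal (r n) * X n \<omega> \<le> ereal (C * K)"
      if "\<omega> \<in> E n" "\<not> ereal (r n) * Y n \<omega> > ereal K" for \<omega>
    proof -
      have "ereal (r n) * X n \<omega> \<le> ereal (r n) * (ereal C * Y n \<omega>)"
        using XY[OF that(1)] N2 n by (intro ereal_mult_left_mono) auto
      also have "\<dots> = ereal C * (ereal (r n) * Y n \<omega>)" by (simp add: ac_simps)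
      also have "\<dots> \<le> ereal C * ereal K"
        using that(2) \<open>0 \<le> C\<close> by (intro ereal_mult_left_mono) (auto simp: not_less)
      finally show ?thesis by simp
    qed
    have "{\<omega>\<in>space M. ereal (r n) * X n \<omega> > ereal (C * K)} \<subseteq> F \<union> (space M - E n)"
      using F(2) X_le by (force simp: not_less)
    moreover have "measure M (F \<union> (space M - E n)) < \<epsilon>"
    proof -
      have "measure M (F \<union> (space M - E n)) \<le> measure M F + measure M (space M - E n)"
        using F(1) E(1) by (intro measure_Un_le) auto
      also have "\<dots> = measure M F + (1 - measure M (E n))"
        using prob_space.prob_compl[OF \<open>prob_space M\<close> E(1)] by simp
      also have "\<dots> < \<epsilon>" using F(3) N2[of n] n by simp
      finally show ?thesis .
    qed
    ultimately show ?thesis using F(1) E(1) by blast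
  qed
  then show "\<exists>K N. \<forall>n\<ge>N. \<exists>F\<in>sets M.
      {\<omega>\<in>space M. ereal (r n) * X n \<omega> > ereal K} \<subseteq> F \<and> measure M F < \<epsilon>"
    by blast
qed

theorem theorem3p4:
  fixes M :: "'w measure"
    and A :: "real^'d^'m" and b :: "real^'m" and c :: "real^'d"
    and bn :: "nat \<Rightarrow> 'w \<Rightarrow> real^'m" and r :: "nat \<Rightarrow> real"
  assumes "prob_space M"
    and "rank A = CARD('m)" and "CARD('m) \<le> CARD('d)"
    and A1: "OPT A c b \<noteq> {}" "bounded (OPT A c b)"
    and B2: "\<exists>E. (\<forall>n. E n \<in> sets M \<and> E n \<subseteq> {\<omega>\<in>space M. OPT A c (bn n \<omega>) \<noteq> {}})
                  \<and> (\<lambda>n. measure M (E n)) \<longlonglongrightarrow> 1"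
    and "\<And>n. bn n \<in> borel_measurable M"
    and "filterlim r at_top sequentially"
    and "bigO_P M (\<lambda>n \<omega>. ereal (norm (bn n \<omega> - b))) r"
  shows "bigO_P M (\<lambda>n \<omega>. hausdorff_dist (OPT A c (bn n \<omega>)) (OPT A c b)) r"
proof -
  obtain C where "0 \<le> C" and C: "\<And>\<beta> \<beta>'. OPT A c \<beta> \<noteq> {} \<Longrightarrow> OPT A c \<beta>' \<noteq> {} \<Longrightarrow>
      hausdorff_dist (OPT A c \<beta>) (OPT A c \<beta>') \<le> ereal (C * norm (\<beta> - \<beta>'))"
    using hausdorff_dist_OPT_le by blast
  obtain E where E: "\<And>n. E n \<in> sets M" "\<And>n. E n \<subseteq> {\<omega>\<in>space M. OPT A c (bn n \<omega>) \<noteq> {}}"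
    "(\<lambda>n. measure M (E n)) \<longlonglongrightarrow> 1"
    using B2 by blast
  have r: "eventually (\<lambda>n. 0 \<le> r n) sequentially"
    using \<open>filterlim r at_top sequentially\<close> by (simp add: filterlim_at_top)
  have hd: "hausdorff_dist (OPT A c (bn n \<omega>)) (OPT A c b) \<le> ereal C * ereal (norm (bn n \<omega> - b))"
    if "\<omega> \<in> E n" for n \<omega>
  proof -
    have "OPT A c (bn n \<omega>) \<noteq> {}" using E(2) that by blast
    then show ?thesis using C[OF _ A1(1)] by simp
  qed
  show ?thesis
    using bigO_P_dominated[OF \<open>prob_space M\<close> \<open>bigO_P M _ r\<close> \<open>0 \<le> C\<close> r E(1,3) hd] .
qed

end
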